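(* Let $\mathfrak{t},\mathfrak{w}$ be sesquilinear forms on $\mathbb{C}^n$ with $\mathfrak{w}\geq0$. (i) The following are equivalent: (a) $\mathfrak{t}$ is $\mathfrak{w}$-left bounded; (b) $\mathfrak{t}$ is $\mathfrak{w}$-left regular; (c) $\ker(\mathfrak{w})\subseteq\ker(\mathfrak{t})$. (ii) $\mathfrak{t}$ is $\mathfrak{w}$-left strongly singular if and only if $\ker(\mathfrak{w})+\ker(\mathfrak{t})=\mathbb{C}^n$.
   Context: A sesquilinear form on a complex vector space $\mathcal{D}$ is a map $\mathfrak{t}:\mathcal{D}\times\mathcal{D}\to\mathbb{C}$, linear in the first and anti-linear in the second variable; write $\mathfrak{t}[f]=\mathfrak{t}(f,f)$; it is non-negative ($\mathfrak{t}\geq0$) if $\mathfrak{t}[f]\geq0$ for all $f$. $\ker(\mathfrak{t}):=\{f\in\mathcal{D}:\mathfrak{t}(f,g)=0\ \forall g\in\mathcal{D}\}$. For non-negative forms $\mathfrak{u},\mathfrak{w}$: $\mathfrak{u}$ is $\mathfrak{w}$-absolutely continuous if $\mathfrak{w}[f_n]\to0$ and $\mathfrak{u}[f_n-f_m]\to0$ imply $\mathfrak{u}[f_n]\to0$; $\mathfrak{u}$ is $\mathfrak{w}$-singular if for every $f$ there is $\{f_n\}$ with $\mathfrak{w}[f_n]\to0$ and $\mathfrak{u}[f-f_n]\to0$. $M_l(\mathfrak{t})$ is the set of non-negative forms $\mathfrak{s}_1$ for which there is a non-negative form $\mathfrak{s}_2$ with $|\mathfrak{t}(f,g)|\leq\mathfrak{s}_1[f]^{1/2}\mathfrak{s}_2[g]^{1/2}$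 for all $f,g$. $\mathfrak{t}$ is $\mathfrak{w}$-left bounded if $C\mathfrak{w}\in M_l(\mathfrak{t})$ for some $C>0$; $\mathfrak{w}$-left regular if some $\mathfrak{s}_1\in M_l(\mathfrak{t})$ is $\mathfrak{w}$-absolutely continuous; $\mathfrak{w}$-left strongly singular if some $\mathfrak{s}_1\in M_l(\mathfrak{t})$ is $\mathfrak{w}$-singular. *)

theory Defs
  imports "HOL-Analysis.Analysis"
begin

text \<open>The space C^n is modelled as complex ^ 'n for an arbitrary finite index type 'n,
  with complex scalar multiplication given by the componentwise scalar product (*s).\<close>

type_synonym 'n form = "complex ^ 'n \<Rightarrow> complex ^ 'n \<Rightarrow> complex"

definition sesquilinear :: "'n::finite form \<Rightarrow> bool" where
  "sesquilinear t \<longleftrightarrow>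
     (\<forall>f g h. t (f + g) h = t f h + t g h) \<and>
     (\<forall>c f h. t (c *s f) h = c * t f h) \<and>
     (\<forall>f g h. t f (g + h) = t f g + t f h) \<and>
     (\<forall>c f g. t f (c *s g) = cnj c * t f g)"

definition nonneg_form :: "'n::finite form \<Rightarrow> bool" where
  "nonneg_form t \<longleftrightarrow> sesquilinear t \<and> (\<forall>f. t f f \<in> \<real> \<and> 0 \<le> Re (t f f))"

definition form_ker :: "'n::finite form \<Rightarrow> (complex ^ 'n) set" where
  "form_ker t = {f. \<forall>g. t f g = 0}"

definition abs_continuous :: "'n::finite form \<Rightarrow> 'n form \<Rightarrow> bool" where
  "abs_continuous u w \<longleftrightarrow>
     (\<forall>fs :: nat \<Rightarrow> complex ^ 'n.
        (\<lambda>k. w (fs k) (fs k)) \<longlonglongrightarrow> 0 \<longrightarrow>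
        (\<forall>e>0. \<exists>N. \<forall>k\<ge>N. \<forall>m\<ge>N. norm (u (fs k - fs m) (fs k - fs m)) < e) \<longrightarrow>
        (\<lambda>k. u (fs k) (fs k)) \<longlonglongrightarrow> 0)"

definition singular_form :: "'n::finite form \<Rightarrow> 'n form \<Rightarrow> bool" where
  "singular_form u w \<longleftrightarrow>
     (\<forall>f. \<exists>fs :: nat \<Rightarrow> complex ^ 'n.
        (\<lambda>k. w (fs k) (fs k)) \<longlonglongrightarrow> 0 \<and>
        (\<lambda>k. u (f - fs k) (f - fs k)) \<longlonglongrightarrow> 0)"

definition Ml :: "'n::finite form \<Rightarrow> 'n form set" where
  "Ml t = {s1. nonneg_form s1 \<and> (\<exists>s2. nonneg_form s2 \<and>
      (\<forall>f g. norm (t f g) \<le> sqrt (Re (s1 f f)) * sqrt (Re (s2 g g))))}"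

definition left_bounded :: "'n::finite form \<Rightarrow> 'n form \<Rightarrow> bool" where
  "left_bounded t w \<longleftrightarrow> (\<exists>C::real. C > 0 \<and> (\<lambda>f g. complex_of_real C * w f g) \<in> Ml t)"

definition left_regular :: "'n::finite form \<Rightarrow> 'n form \<Rightarrow> bool" where
  "left_regular t w \<longleftrightarrow> (\<exists>s1\<in>Ml t. abs_continuous s1 w)"

definition left_strongly_singular :: "'n::finite form \<Rightarrow> 'n form \<Rightarrow> bool" where
  "left_strongly_singular t w \<longleftrightarrow> (\<exists>s1\<in>Ml t. singular_form s1 w)"

end

theory Submission imports Defs begin

text \<open>
  The key fact is coercivity of a non-negative form modulo its kernel: by compactness of the
  unit sphere, \<open>w[r] \<ge> m |r|^2\<close> on the orthogonal complement of \<open>ker w\<close>, hence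
  \<open>w[f] \<ge> m dist(f, ker w)^2\<close>. If \<open>ker w \<subseteq> ker t\<close>, then
  \<open>|t(f,g)| = |t(f - a, g)| \<le> K |f - a| |g|\<close> for the nearest \<open>a \<in> ker w\<close>, so \<open>(K^2/m) w\<close>
  dominates \<open>t\<close> on the left; conversely any \<open>w\<close>-absolutely continuous \<open>s \<in> M\<^sub>l(t)\<close> vanishes
  on \<open>ker w\<close> (test with constant sequences), and so does \<open>t\<close>.

  For (ii), writing \<open>t(f,g) = \<langle>T f, g\<rangle>\<close>, the form \<open>\<langle>T f, T g\<rangle>\<close> lies in \<open>M\<^sub>l(t)\<close> and
  vanishes exactly on \<open>ker t\<close>, which gives strong singularity when \<open>ker w + ker t\<close> is everything.
  Conversely, if \<open>s[f - f\<^sub>k] \<rightarrow> 0\<close> and \<open>w[f\<^sub>k] \<rightarrow> 0\<close>, coercivity replaces \<open>f\<^sub>k\<close> by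
  \<open>a\<^sub>k \<in> ker w\<close> with \<open>T a\<^sub>k \<rightarrow> T f\<close>; as \<open>T(ker w)\<close> is a closed subspace, \<open>T f = T a\<close> for some
  \<open>a \<in> ker w\<close>, i.e. \<open>f - a \<in> ker t\<close>.
\<close>

lemma scaleR_eq_of_real_smult: "r *\<^sub>R (x::complex^'n) = complex_of_real r *s x"
  by (simp add: vec_eq_iff complex_eq_iff)

context
  fixes t :: "'n::finite form"
  assumes t: "sesquilinear t"
begin

lemma sesquilinear_add: "t (f + g) h = t f h + t g h" "t h (f + g) = t h f + t h g"
  using t unfolding sesquilinear_def by blast+

lemma sesquilinear_smult: "t (c *s f) h = c * t f h" "t h (c *s f) = cnj c * t h f"
  using t unfolding sesquilinear_def by blast+

lemma sesquilinear_zero: "t 0 g = 0" "t f 0 = 0"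
  using sesquilinear_add(1)[of 0 0 g] sesquilinear_add(2)[of f 0 0] by simp_all

lemma sesquilinear_diff: "t (f - g) h = t f h - t g h"
  using sesquilinear_add(1)[of "f - g" g h] by simp

lemma sesquilinear_imp_bilinear: "bilinear t"
  unfolding bilinear_def
  by (auto intro!: linearI simp: sesquilinear_add sesquilinear_smult scaleR_eq_of_real_smult
      scaleR_conv_of_real)

lemma sesquilinear_sum_right: "finite A \<Longrightarrow> t f (\<Sum>j\<in>A. h j) = (\<Sum>j\<in>A. t f (h j))"
  by (induction A rule: finite_induct) (simp_all add: sesquilinear_zero sesquilinear_add)

lemma sesquilinear_expand_right: "t f g = (\<Sum>j\<in>UNIV. cnj (g $ j) * t f (axis j 1))"
proof -
  have "t f g = t f (\<Sum>j\<in>UNIV. g $ j *s axis j 1)"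
    by (simp add: basis_expansion)
  then show ?thesis
    by (simp add: sesquilinear_sum_right sesquilinear_smult)
qed

lemma form_ker_subspace: "subspace (form_ker t)"
  unfolding subspace_def form_ker_def
  by (simp add: sesquilinear_zero sesquilinear_add sesquilinear_smult scaleR_eq_of_real_smult)

end

context
  fixes w :: "'n::finite form"
  assumes w: "nonneg_form w"
begin

lemma nonneg_form_sesquilinear: "sesquilinear w"
  using w unfolding nonneg_form_def by blast

lemma nonneg_form_Re_nonneg: "0 \<le> Re (w f f)"
  using w unfolding nonneg_form_def by blast

lemma nonneg_form_hermitian: "w g f = cnj (w f g)"
proof -
  note s = nonneg_form_sesquilinear
  have real: "Im (w h h) = 0" for h
    using w unfolding nonneg_form_def by (auto simp: complex_is_Real_iff)
  have "w (f + g) (f + g) = w f f + w g g + w f g + w g f"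
    by (simp add: sesquilinear_add[OF s])
  then have "Im (w f g) + Im (w g f) = 0"
    using real[of "f + g"] real[of f] real[of g] by simp
  moreover have "w (f + \<i> *s g) (f + \<i> *s g) = w f f + w g g - \<i> * w f g + \<i> * w g f"
    by (simp add: sesquilinear_add[OF s] sesquilinear_smult[OF s] algebra_simps)
  then have "Re (w g f) - Re (w f g) = 0"
    using real[of "f + \<i> *s g"] real[of f] real[of g] by simp
  ultimately show ?thesis
    by (simp add: complex_eq_iff)
qed

lemma nonneg_form_null_imp_ker:
  assumes null: "Re (w f f) = 0"
  shows "f \<in> form_ker w"
  unfolding form_ker_def
proof safe
  fix g
  note s = nonneg_form_sesquilinear
  define z where "z = w f g"
  define W where "W = Re (w g g)"
  define r where "r = 1 / (1 + W)"
  have "W \<ge> 0"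
    unfolding W_def by (rule nonneg_form_Re_nonneg)
  then have r: "r > 0" "r * W < 1"
    unfolding r_def by (simp_all add: field_simps)
  \<comment> \<open>Test positivity on \<open>f - r z g\<close>: the cross terms give \<open>-2 r |z|^2\<close>, the square term only \<open>r^2 |z|^2 W\<close>.\<close>
  define c where "c = - complex_of_real r * z"
  have zz: "z * cnj z = (complex_of_real (cmod z))\<^sup>2"
    by (metis complex_norm_square of_real_power)
  have "w (f + c *s g) (f + c *s g) = w f f + cnj c * z + c * cnj z + c * cnj c * w g g"
    using nonneg_form_hermitian[of g f]
    by (simp add: sesquilinear_add[OF s] sesquilinear_smult[OF s] z_def algebra_simps)
  also have "\<dots> = w f f - 2 * complex_of_real r * (z * cnj z) + (complex_of_real r)\<^sup>2 * (z * cnj z) * w g g"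
    unfolding c_def by (simp add: algebra_simps power2_eq_square)
  also have "\<dots> = w f f - complex_of_real (2 * r * (cmod z)\<^sup>2) + complex_of_real (r\<^sup>2 * (cmod z)\<^sup>2) * w g g"
    unfolding zz by simp
  finally have "0 \<le> - 2 * r * (cmod z)\<^sup>2 + r\<^sup>2 * (cmod z)\<^sup>2 * W"
    using nonneg_form_Re_nonneg[of "f + c *s g"] null by (simp add: W_def)
  then have "0 \<le> r * (cmod z)\<^sup>2 * (r * W - 2)"
    by (simp add: algebra_simps power2_eq_square)
  with r have "cmod z = 0"
    by (smt (verit) mult_pos_neg zero_less_power2 mult_pos_pos)
  then show "w f g = 0"
    by (simp add: z_def)
qed

lemma nonneg_form_add_ker: "a \<in> form_ker w \<Longrightarrow> w (a + r) (a + r) = w r r"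
  using nonneg_form_hermitian[of a r]
  by (simp add: form_ker_def sesquilinear_add[OF nonneg_form_sesquilinear])

lemma nonneg_form_pos_on_ker_orthogonal:
  obtains m where "m > 0"
    "\<And>r. (\<forall>b\<in>form_ker w. orthogonal r b) \<Longrightarrow> m * (norm r)\<^sup>2 \<le> Re (w r r)"
proof -
  note s = nonneg_form_sesquilinear
  define S where "S = {r. norm r = 1 \<and> (\<forall>b\<in>form_ker w. orthogonal r b)}"
  have pos: "Re (w r r) > 0" if "r \<in> S" for r
  proof (rule ccontr)
    assume "\<not> Re (w r r) > 0"
    then have "r \<in> form_ker w"
      using nonneg_form_Re_nonneg[of r] nonneg_form_null_imp_ker by force
    with that show False
      by (auto simp: S_def orthogonal_def)
  qed
  obtain m where m: "m > 0" "\<And>r. r \<in> S \<Longrightarrow> m \<le> Re (w r r)"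
  proof (cases "S = {}")
    case False
    have "S = sphere 0 1 \<inter> (\<Inter>b\<in>form_ker w. {x. b \<bullet> x = 0})"
      unfolding S_def by (auto simp: orthogonal_def inner_commute)
    then have "compact S"
      by (simp add: compact_eq_bounded_closed closed_Int closed_INT closed_hyperplane bounded_Int)
    moreover have "continuous_on S (\<lambda>r. Re (w r r))"
      using sesquilinear_imp_bilinear[OF s, unfolded bilinear_conv_bounded_bilinear]
      by (intro continuous_on_Re bounded_bilinear.continuous_on[of w] continuous_on_id)
    ultimately obtain r0 where "r0 \<in> S" "\<forall>r\<in>S. Re (w r0 r0) \<le> Re (w r r)"
      using continuous_attains_inf[of S "\<lambda>r. Re (w r r)"] False by blast
    with pos that show ?thesis
      by blast
  qed (use that[of 1] in simp)
  show ?thesis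
  proof (rule that[OF m(1)])
    fix r assume orth: "\<forall>b\<in>form_ker w. orthogonal r b"
    show "m * (norm r)\<^sup>2 \<le> Re (w r r)"
    proof (cases "r = 0")
      case False
      have "(1 / norm r) *\<^sub>R r \<in> S"
        using False orth by (auto simp: S_def orthogonal_def)
      then have "m \<le> Re (w ((1 / norm r) *\<^sub>R r) ((1 / norm r) *\<^sub>R r))"
        by (rule m(2))
      also have "\<dots> = Re (w r r) / (norm r)\<^sup>2"
        by (simp add: scaleR_eq_of_real_smult sesquilinear_smult[OF s] power2_eq_square)
      finally show ?thesis
        using False by (simp add: field_simps)
    qed (simp add: sesquilinear_zero[OF s])
  qed
qed

lemma nonneg_form_coercive:
  obtains m where "m > 0" "\<And>f. \<exists>a\<in>form_ker w. m * (norm (f - a))\<^sup>2 \<le> Re (w f f)"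
proof -
  obtain m where m: "m > 0"
    "\<And>r. (\<forall>b\<in>form_ker w. orthogonal r b) \<Longrightarrow> m * (norm r)\<^sup>2 \<le> Re (w r r)"
    using nonneg_form_pos_on_ker_orthogonal by blast
  have "\<exists>a\<in>form_ker w. m * (norm (f - a))\<^sup>2 \<le> Re (w f f)" for f
  proof -
    have "span (form_ker w) = form_ker w"
      using form_ker_subspace[OF nonneg_form_sesquilinear] by simp
    then obtain a r where a: "a \<in> form_ker w" "f = a + r" and "\<forall>b\<in>form_ker w. orthogonal r b"
      using orthogonal_subspace_decomp_exists[of "form_ker w" f] by metis
    then have "m * (norm r)\<^sup>2 \<le> Re (w (a + r) (a + r))"
      using m(2) nonneg_form_add_ker by simp
    with a show ?thesis
      by (intro bexI[of _ a]) simp_all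
  qed
  with m(1) that show ?thesis
    by blast
qed

lemma nonneg_form_null_seq_approaches_ker:
  assumes "(\<lambda>k. w (fs k) (fs k)) \<longlonglongrightarrow> 0"
  obtains as where "\<And>k. as k \<in> form_ker w" "(\<lambda>k. fs k - as k) \<longlonglongrightarrow> 0"
proof -
  obtain m where m: "m > 0" "\<And>f. \<exists>a\<in>form_ker w. m * (norm (f - a))\<^sup>2 \<le> Re (w f f)"
    using nonneg_form_coercive by blast
  then obtain as where as: "\<And>k. as k \<in> form_ker w"
    "\<And>k. m * (norm (fs k - as k))\<^sup>2 \<le> Re (w (fs k) (fs k))"
    using bchoice[of UNIV "\<lambda>k a. a \<in> form_ker w \<and> m * (norm (fs k - a))\<^sup>2 \<le> Re (w (fs k) (fs k))"]
    by blast
  have "(\<lambda>k. fs k - as k) \<longlonglongrightarrow> 0"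
  proof (rule Lim_null_comparison)
    show "\<forall>\<^sub>F k in sequentially. norm (fs k - as k) \<le> sqrt (Re (w (fs k) (fs k)) / m)"
      using as(2) m(1) by (intro always_eventually allI real_le_rsqrt) (simp add: field_simps)
    have "(\<lambda>k. Re (w (fs k) (fs k)) / m) \<longlonglongrightarrow> 0"
      using tendsto_Re[OF assms] by (simp add: tendsto_divide_zero)
    then show "(\<lambda>k. sqrt (Re (w (fs k) (fs k)) / m)) \<longlonglongrightarrow> 0"
      using tendsto_real_sqrt by fastforce
  qed
  with as(1) that show ?thesis
    by blast
qed

end

definition std_form :: "'n::finite form" where
  "std_form g h = (\<Sum>j\<in>UNIV. g $ j * cnj (h $ j))"

definition riesz_vec :: "'n::finite form \<Rightarrow> complex ^ 'n \<Rightarrow> complex ^ 'n" where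
  "riesz_vec t f = (\<chi> j. t f (axis j 1))"

definition riesz_form :: "'n::finite form \<Rightarrow> 'n form" where
  "riesz_form t f h = std_form (riesz_vec t f) (riesz_vec t h)"

lemma sum_mult_cnj_self: "(\<Sum>j\<in>A. z j * cnj (z j)) = of_real (\<Sum>j\<in>A. (cmod (z j))\<^sup>2)"
  by (simp only: of_real_sum complex_norm_square)

lemma std_form_nonneg: "nonneg_form std_form"
  unfolding nonneg_form_def sesquilinear_def std_form_def
  by (simp add: sum.distrib sum_distrib_left algebra_simps sum_mult_cnj_self sum_nonneg)

lemma Re_std_form_self: "Re (std_form g g) = (norm g)\<^sup>2"
proof -
  have "Re (std_form g g) = (\<Sum>j\<in>UNIV. (cmod (g $ j))\<^sup>2)"
    unfolding std_form_def sum_mult_cnj_self by simp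
  also have "\<dots> = (norm g)\<^sup>2"
    unfolding norm_vec_def L2_set_def by (simp add: sum_nonneg)
  finally show ?thesis .
qed

lemma norm_std_form_le: "norm (std_form g h) \<le> norm g * norm h"
proof -
  have "norm (std_form g h) \<le> (\<Sum>j\<in>UNIV. \<bar>cmod (g $ j)\<bar> * \<bar>cmod (h $ j)\<bar>)"
    unfolding std_form_def by (rule order_trans[OF norm_sum]) (simp add: norm_mult)
  also have "\<dots> \<le> L2_set (\<lambda>j. cmod (g $ j)) UNIV * L2_set (\<lambda>j. cmod (h $ j)) UNIV"
    by (rule L2_set_mult_ineq)
  finally show ?thesis
    by (simp add: norm_vec_def)
qed

context
  fixes t :: "'n::finite form"
  assumes t: "sesquilinear t"
begin

lemma sesquilinear_eq_std_form: "t f g = std_form (riesz_vec t f) g"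
  by (subst sesquilinear_expand_right[OF t]) (simp add: std_form_def riesz_vec_def mult.commute)

lemma norm_sesquilinear_le: "norm (t f g) \<le> norm (riesz_vec t f) * norm g"
  by (subst sesquilinear_eq_std_form) (rule norm_std_form_le)

lemma riesz_vec_add: "riesz_vec t (f + g) = riesz_vec t f + riesz_vec t g"
  by (simp add: riesz_vec_def vec_eq_iff sesquilinear_add[OF t])

lemma riesz_vec_smult: "riesz_vec t (c *s f) = c *s riesz_vec t f"
  by (simp add: riesz_vec_def vec_eq_iff sesquilinear_smult[OF t])

lemma linear_riesz_vec: "linear (riesz_vec t)"
  by (rule linearI) (simp_all add: riesz_vec_add riesz_vec_smult scaleR_eq_of_real_smult)

lemma riesz_vec_eq_0_iff: "riesz_vec t f = 0 \<longleftrightarrow> f \<in> form_ker t"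
proof
  assume "riesz_vec t f = 0"
  then show "f \<in> form_ker t"
    using sesquilinear_eq_std_form by (simp add: form_ker_def std_form_def)
qed (simp add: form_ker_def riesz_vec_def vec_eq_iff)

lemma riesz_form_nonneg: "nonneg_form (riesz_form t)"
  using std_form_nonneg unfolding nonneg_form_def sesquilinear_def riesz_form_def
  by (simp only: riesz_vec_add riesz_vec_smult) blast

lemma Re_riesz_form_self: "Re (riesz_form t f f) = (norm (riesz_vec t f))\<^sup>2"
  by (simp add: riesz_form_def Re_std_form_self)

end

lemma Ml_std_formI:
  assumes "nonneg_form s" "\<And>f g. norm (t f g) \<le> sqrt (Re (s f f)) * norm g"
  shows "s \<in> Ml t"
  using assms std_form_nonneg by (auto simp: Ml_def Re_std_form_self intro!: exI[of _ std_form])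

lemma riesz_form_in_Ml: "sesquilinear t \<Longrightarrow> riesz_form t \<in> Ml t"
  by (rule Ml_std_formI) (simp_all add: riesz_form_nonneg Re_riesz_form_self norm_sesquilinear_le)

lemma nonneg_form_scale:
  assumes "nonneg_form w" "C \<ge> 0"
  shows "nonneg_form (\<lambda>f g. complex_of_real C * w f g)"
  using assms unfolding nonneg_form_def sesquilinear_def
  by (simp add: algebra_simps Reals_mult)

lemma abs_continuous_scale: "abs_continuous (\<lambda>f g. complex_of_real C * w f g) w"
  unfolding abs_continuous_def by (auto intro: tendsto_mult_right_zero)

lemma left_bounded_imp_left_regular: "left_bounded t w \<Longrightarrow> left_regular t w"
  unfolding left_bounded_def left_regular_def using abs_continuous_scale by blast

lemma Ml_bound:
  assumes "s \<in> Ml t"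
  obtains s' where "\<And>f g. norm (t f g) \<le> sqrt (Re (s f f)) * sqrt (Re (s' g g))"
  using assms unfolding Ml_def by blast

lemma Ml_null_imp_ker:
  assumes "s \<in> Ml t" "s f f = 0"
  shows "f \<in> form_ker t"
proof -
  obtain s' where "\<And>f g. norm (t f g) \<le> sqrt (Re (s f f)) * sqrt (Re (s' g g))"
    using Ml_bound[OF assms(1)] by blast
  then have "norm (t f g) \<le> 0" for g
    using assms(2) by (metis mult_zero_left real_sqrt_zero zero_complex.sel(1))
  then show ?thesis
    by (simp add: form_ker_def)
qed

lemma abs_continuous_ker_null:
  assumes "nonneg_form s" "abs_continuous s w" "f \<in> form_ker w"
  shows "s f f = 0"
proof -
  have "(\<lambda>k::nat. s f f) \<longlonglongrightarrow> 0"
    using assms(2,3)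
    by (auto simp: abs_continuous_def form_ker_def sesquilinear_zero[OF nonneg_form_sesquilinear[OF assms(1)]]
        dest: spec[of _ "\<lambda>k. f"])
  then show ?thesis
    by (simp add: LIMSEQ_const_iff)
qed

lemma left_regular_imp_ker_subset:
  assumes "left_regular t w"
  shows "form_ker w \<subseteq> form_ker t"
proof
  fix f assume f: "f \<in> form_ker w"
  obtain s where s: "s \<in> Ml t" "abs_continuous s w"
    using assms unfolding left_regular_def by blast
  then have "nonneg_form s"
    by (simp add: Ml_def)
  with s f show "f \<in> form_ker t"
    by (blast intro: Ml_null_imp_ker abs_continuous_ker_null)
qed

lemma ker_subset_imp_left_bounded:
  assumes t: "sesquilinear t" and w: "nonneg_form w" and ker: "form_ker w \<subseteq> form_ker t"
  shows "left_bounded t w"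
proof -
  obtain m where m: "m > 0" "\<And>f. \<exists>a\<in>form_ker w. m * (norm (f - a))\<^sup>2 \<le> Re (w f f)"
    using nonneg_form_coercive[OF w] by blast
  obtain K where K: "K > 0" "\<And>h. norm (riesz_vec t h) \<le> norm h * K"
    using bounded_linear.pos_bounded linear_conv_bounded_linear linear_riesz_vec[OF t] by metis
  define C where "C = K\<^sup>2 / m"
  have C: "C > 0"
    using K m by (simp add: C_def)
  have "norm (t f g) \<le> sqrt (Re (complex_of_real C * w f f)) * norm g" for f g
  proof -
    obtain a where a: "a \<in> form_ker w" "m * (norm (f - a))\<^sup>2 \<le> Re (w f f)"
      using m(2) by blast
    with ker have "t f g = t (f - a) g"
      by (auto simp: sesquilinear_diff[OF t] form_ker_def)
    also have "norm \<dots> \<le> norm (riesz_vec t (f - a)) * norm g"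
      by (rule norm_sesquilinear_le[OF t])
    also have "\<dots> \<le> K * norm (f - a) * norm g"
      using K(2)[of "f - a"] by (simp add: mult_right_mono mult.commute[of _ K])
    also have "K * norm (f - a) = sqrt (C * (m * (norm (f - a))\<^sup>2))"
      using K m by (simp add: C_def real_sqrt_mult)
    also have "\<dots> \<le> sqrt (C * Re (w f f))"
      using a(2) C by (simp add: mult_left_mono)
    finally show ?thesis
      by (simp add: mult_right_mono)
  qed
  then have "(\<lambda>f g. complex_of_real C * w f g) \<in> Ml t"
    by (intro Ml_std_formI nonneg_form_scale[OF w]) (use C in simp_all)
  with C show ?thesis
    unfolding left_bounded_def by blast
qed

lemma Ml_tendsto_zero:
  assumes "s \<in> Ml t" "(\<lambda>k. s (hs k) (hs k)) \<longlonglongrightarrow> 0"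
  shows "(\<lambda>k. t (hs k) g) \<longlonglongrightarrow> 0"
proof -
  obtain s' where s': "\<And>f g. norm (t f g) \<le> sqrt (Re (s f f)) * sqrt (Re (s' g g))"
    using Ml_bound[OF assms(1)] by blast
  have "(\<lambda>k. sqrt (Re (s (hs k) (hs k)))) \<longlonglongrightarrow> 0"
    using tendsto_real_sqrt[OF tendsto_Re[OF assms(2)]] by simp
  then have "(\<lambda>k. sqrt (Re (s (hs k) (hs k))) * sqrt (Re (s' g g))) \<longlonglongrightarrow> 0"
    by (rule tendsto_mult_left_zero)
  then show ?thesis
    by (rule Lim_null_comparison[rotated]) (simp add: s')
qed

lemma ker_sum_imp_left_strongly_singular:
  assumes t: "sesquilinear t" and sum: "{f + g | f g. f \<in> form_ker w \<and> g \<in> form_ker t} = UNIV"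
  shows "left_strongly_singular t w"
  unfolding left_strongly_singular_def
proof (intro bexI[OF _ riesz_form_in_Ml[OF t]])
  show "singular_form (riesz_form t) w"
    unfolding singular_form_def
  proof
    fix f
    obtain a b where "f = a + b" "a \<in> form_ker w" "b \<in> form_ker t"
      using sum by blast
    then have "w a a = 0" "riesz_vec t (f - a) = 0"
      by (simp_all add: form_ker_def riesz_vec_eq_0_iff[OF t])
    then have "w a a = 0" "riesz_form t (f - a) (f - a) = 0"
      by (simp_all add: riesz_form_def std_form_def)
    then show "\<exists>fs. (\<lambda>k. w (fs k) (fs k)) \<longlonglongrightarrow> 0 \<and> (\<lambda>k. riesz_form t (f - fs k) (f - fs k)) \<longlonglongrightarrow> 0"
      by (intro exI[of _ "\<lambda>k. a"]) simp
  qed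
qed

lemma left_strongly_singular_imp_ker_sum:
  assumes t: "sesquilinear t" and w: "nonneg_form w" and sing: "left_strongly_singular t w"
  shows "{f + g | f g. f \<in> form_ker w \<and> g \<in> form_ker t} = UNIV"
proof -
  obtain s where s: "s \<in> Ml t" "singular_form s w"
    using sing unfolding left_strongly_singular_def by blast
  let ?T = "riesz_vec t"
  have lin: "linear ?T"
    by (rule linear_riesz_vec[OF t])
  have "f \<in> {f + g | f g. f \<in> form_ker w \<and> g \<in> form_ker t}" for f
  proof -
    obtain fs where fs: "(\<lambda>k. w (fs k) (fs k)) \<longlonglongrightarrow> 0" "(\<lambda>k. s (f - fs k) (f - fs k)) \<longlonglongrightarrow> 0"
      using s(2) unfolding singular_form_def by blast
    obtain as where as: "\<And>k. as k \<in> form_ker w" "(\<lambda>k. fs k - as k) \<longlonglongrightarrow> 0"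
      using nonneg_form_null_seq_approaches_ker[OF w fs(1)] by blast
    have "(\<lambda>k. ?T (f - fs k)) \<longlonglongrightarrow> 0"
      by (rule vec_tendstoI) (simp add: riesz_vec_def Ml_tendsto_zero[OF s(1) fs(2)])
    moreover have "(\<lambda>k. ?T (fs k - as k)) \<longlonglongrightarrow> 0"
      using bounded_linear.tendsto_zero[OF lin[unfolded linear_conv_bounded_linear] as(2)] .
    ultimately have "(\<lambda>k. ?T f - ?T (f - fs k) - ?T (fs k - as k)) \<longlonglongrightarrow> ?T f"
      using tendsto_diff[OF tendsto_diff[OF tendsto_const]] by fastforce
    then have lim: "(\<lambda>k. ?T (as k)) \<longlonglongrightarrow> ?T f"
      by (simp add: linear_diff[OF lin])
    have "closed (?T ` form_ker w)"
      by (intro closed_subspace linear_subspace_image lin form_ker_subspace nonneg_form_sesquilinear w)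
    moreover have "\<forall>\<^sub>F k in sequentially. ?T (as k) \<in> ?T ` form_ker w"
      using as(1) by simp
    ultimately have "?T f \<in> ?T ` form_ker w"
      using Lim_in_closed_set[OF _ _ trivial_limit_sequentially lim] by blast
    then obtain a where a: "a \<in> form_ker w" "?T f = ?T a"
      by blast
    then have "f - a \<in> form_ker t"
      by (simp add: linear_diff[OF lin] flip: riesz_vec_eq_0_iff[OF t])
    moreover have "f = a + (f - a)"
      by simp
    ultimately show ?thesis
      using a(1) by blast
  qed
  then show ?thesis
    by blast
qed

theorem mainTheorem2:
  fixes t w :: "complex ^ 'n::finite \<Rightarrow> complex ^ 'n \<Rightarrow> complex"
  assumes "sesquilinear t" and "sesquilinear w" and "nonneg_form w"
  shows "(left_bounded t w \<longleftrightarrow> left_regular t w)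
       \<and> (left_regular t w \<longleftrightarrow> form_ker w \<subseteq> form_ker t)
       \<and> (left_strongly_singular t w \<longleftrightarrow>
            {f + g | f g. f \<in> form_ker w \<and> g \<in> form_ker t} = UNIV)"
proof (intro conjI iffI)
  show "left_regular t w" if "left_bounded t w"
    using that by (rule left_bounded_imp_left_regular)
  show "left_bounded t w" if "left_regular t w"
    using left_regular_imp_ker_subset[OF that] by (rule ker_subset_imp_left_bounded[OF assms(1,3)])
  show "form_ker w \<subseteq> form_ker t" if "left_regular t w"
    using that by (rule left_regular_imp_ker_subset)
  show "left_regular t w" if "form_ker w \<subseteq> form_ker t"
    using ker_subset_imp_left_bounded[OF assms(1,3) that] by (rule left_bounded_imp_left_regular)
  show "{f + g | f g. f \<in> form_ker w \<and> g \<in> form_ker t} = UNIV" if "left_strongly_singular t w"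
    using that by (rule left_strongly_singular_imp_ker_sum[OF assms(1,3)])
  show "left_strongly_singular t w" if "{f + g | f g. f \<in> form_ker w \<and> g \<in> form_ker t} = UNIV"
    using that by (rule ker_sum_imp_left_strongly_singular[OF assms(1)])
qed

end
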